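(* Let $\mathsf{COM}$ be a commitment scheme satisfying computational hiding, let $\mathsf{DS}$ be a digital signature scheme, and let $\mathcal{H}$ be a hash function family. Then the $1$-out-of-$n$ oblivious signature scheme $(1,n)\text{-}\mathsf{OS}_{\mathsf{Ours}}[\mathcal{H},\mathsf{COM},\mathsf{DS}]$ (described in the context) satisfies ambiguity.
   Context: A function is negligible in $\lambda$ if it is eventually smaller than $1/p(\lambda)$ for every polynomial $p$; PPT means probabilistic polynomial time. Commitment scheme $\mathsf{COM}=(\mathsf{KeyGen},\mathsf{Commit})$: $\mathsf{KeyGen}(1^\lambda)$ outputs a commitment key $\mathsf{ck}$ defining a message space, a randomness space $\Omega_{\mathsf{ck}}$ and a commitment space; $\mathsf{Commit}(\mathsf{ck},m;r)$ outputs a commitment $c$. Computational hiding: for every PPT $\mathsf{A}$, the quantity $\left|\Pr[b=b^*]-\tfrac12\right|$ is negligible in the experiment $\mathsf{ck}\leftarrow\mathsf{KeyGen}(1^\lambda)$, $(m_0,m_1,\mathsf{st})\leftarrow\mathsf{A}(\mathsf{ck})$, $b\leftarrow\{0,1\}$ uniformly, $c^*\leftarrow\mathsf{Commit}(\mathsf{ck},m_b)$ (with uniformly random randomness), $b^*\leftarrow\mathsf{A}(c^*,\mathsf{st})$. Digital signature scheme $\mathsf{DS}=(\mathsf{Setup},\mathsf{KeyGen},\mathsf{Sign},\mathsf{Verify})$ with the usual syntax: $\mathsf{Setup}(1^\lambda)\to\mathsf{pp}$, $\mathsf{KeyGen}(\mathsf{pp})\to(\mathsf{vk},\mathsf{sk})$,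 $\mathsf{Sign}(\mathsf{sk},m)\to\sigma$, $\mathsf{Verify}(\mathsf{vk},m,\sigma)\to\{0,1\}$. Hash family $\mathcal{H}=\{H_\lambda\}$ with $H_\lambda=\{H_{\lambda,i}:\{0,1\}^*\to\{0,1\}^\lambda\}_{i\in\mathcal{I}_\lambda}$. Merkle tree (for $n=2^k>1$, a list $M=(m_0,\dots,m_{n-1})$ and a hash $H$): leaf $i$ is labeled by the $k$-bit binary expansion $b_1\cdots b_k$ of $i$ and gets value $h_{b_1\cdots b_k}=H(m_i)$; each internal node $w_{b_1\cdots b_\ell}$ gets $h_{b_1\cdots b_\ell}=H(h_{b_1\cdots b_\ell 0}\,\|\,h_{b_1\cdots b_\ell 1})$; $\mathsf{root}=h_\epsilon=H(h_0\|h_1)$. $\mathsf{MerkleTree}^H(M)$ outputs $\mathsf{root}$ and the whole tree $\mathsf{tree}$. $\mathsf{MerklePath}^H(\mathsf{tree},i)$ outputs $\mathsf{path}=(h_{\bar b_1},h_{b_1\bar b_2},\dots,h_{b_1\cdots b_{k-1}\bar b_k})$ where $\bar b=1-b$. $\mathsf{RootReconstruct}^H(\mathsf{path},m,i)$ sets the leaf value $H(m)$ at position $b_1\cdots b_k$ and recomputes the values up the tree using the sibling values in $\mathsf{path}$, outputting the resulting root value. A $1$-out-of-$n$ oblivious signature scheme has algorithms $(\mathsf{Setup},\mathsf{KeyGen},\mathsf{U}_1,\mathsf{S}_2,\mathsf{U}_{\mathsf{Der}},\mathsf{Verify})$: $\mathsf{U}_1(\mathsf{vk},M,j)$ (user,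 $M$ a list of $n$ messages, $j\in\{0,\dots,n-1\}$) outputs a first message and state $(\mu,\mathsf{st})$ or $\bot$; $\mathsf{S}_2(\mathsf{vk},\mathsf{sk},M,\mu)$ (signer) outputs a second message $\rho$ or $\bot$; $\mathsf{U}_{\mathsf{Der}}(\mathsf{vk},\mathsf{st},\rho)$ outputs $(m,\sigma)$ or $\bot$; $\mathsf{Verify}(\mathsf{vk},m,\sigma)\in\{0,1\}$. Ambiguity: for every PPT $\mathsf{A}$, $\left|\Pr[b^*=b]-\tfrac12\right|$ is negligible in $\lambda$ in the experiment: $\mathsf{pp}\leftarrow\mathsf{Setup}(1^\lambda)$, $(\mathsf{vk},\mathsf{sk})\leftarrow\mathsf{KeyGen}(\mathsf{pp})$, $(M=(m_0,\dots,m_{n-1}),i_0,i_1,\mathsf{st}_{\mathsf{A}})\leftarrow\mathsf{A}(\mathsf{pp},\mathsf{vk},\mathsf{sk})$, $b\leftarrow\{0,1\}$ uniformly, $(\mu,\mathsf{st})\leftarrow\mathsf{U}_1(\mathsf{vk},M,i_b)$, $b^*\leftarrow\mathsf{A}(\mu,\mathsf{st}_{\mathsf{A}})$. The scheme $(1,n)\text{-}\mathsf{OS}_{\mathsf{Ours}}[\mathcal{H},\mathsf{COM},\mathsf{DS}]$ (with $n>1$ a power of $2$): - $\mathsf{Setup}(1^\lambda)$: $H\leftarrow H_\lambda$ uniformly, $\mathsf{ck}\leftarrow\mathsf{COM.KeyGen}(1^\lambda)$, $\mathsf{pp}^{\mathsf{DS}}\leftarrow\mathsf{DS.Setup}(1^\lambda)$;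 output $\mathsf{pp}=(H,\mathsf{ck},\mathsf{pp}^{\mathsf{DS}})$. - $\mathsf{KeyGen}(\mathsf{pp})$: $(\mathsf{vk},\mathsf{sk})\leftarrow\mathsf{DS.KeyGen}(\mathsf{pp}^{\mathsf{DS}})$. - $\mathsf{U}_1(\mathsf{vk},M=(m_0,\dots,m_{n-1}),j)$: if $m_t=m_{t'}$ for some $t\ne t'$, output $\bot$; else $r\leftarrow\Omega_{\mathsf{ck}}$ uniformly, $c\leftarrow\mathsf{COM.Commit}(\mathsf{ck},m_j;r)$, output $\mu=c$ and $\mathsf{st}=(M,c,r,j)$. - $\mathsf{S}_2(\mathsf{vk},\mathsf{sk},M,\mu=c)$: if $M$ has two equal entries at distinct positions, output $\bot$; else $(\mathsf{root},\mathsf{tree})\leftarrow\mathsf{MerkleTree}^H(M)$, output $\rho=\sigma^{\mathsf{DS}}\leftarrow\mathsf{DS.Sign}(\mathsf{sk},(\mathsf{root},c))$. - $\mathsf{U}_{\mathsf{Der}}(\mathsf{vk},\mathsf{st}=(M,c,r,j),\rho=\sigma^{\mathsf{DS}})$: $(\mathsf{root},\mathsf{tree})\leftarrow\mathsf{MerkleTree}^H(M)$, $\mathsf{path}\leftarrow\mathsf{MerklePath}^H(\mathsf{tree},j)$; if $\mathsf{DS.Verify}(\mathsf{vk},(\mathsf{root},c),\sigma^{\mathsf{DS}})=0$ output $\bot$; else output $(m_j,\sigma)$ with $\sigma=(\mathsf{root},c,\sigma^{\mathsf{DS}},\mathsf{path},j,r)$. - $\mathsf{Verify}(\mathsf{vk},m,\sigma=(\mathsf{root},c,\sigma^{\mathsf{DS}},\mathsf{path},j,r))$: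 output $1$ iff $\mathsf{root}=\mathsf{RootReconstruct}^H(\mathsf{path},m,j)$, $c=\mathsf{COM.Commit}(\mathsf{ck},m;r)$, and $\mathsf{DS.Verify}(\mathsf{vk},(\mathsf{root},c),\sigma^{\mathsf{DS}})=1$. *)

theory Defs
  imports "HOL-Probability.Probability"
begin

definition coin_pmf :: "bool pmf" where
  "coin_pmf = pmf_of_set (UNIV :: bool set)"

definition negligible :: "(nat \<Rightarrow> real) \<Rightarrow> bool" where
  "negligible f \<longleftrightarrow> (\<forall>c::nat. eventually (\<lambda>k. \<bar>f k\<bar> < 1 / real k ^ c) sequentially)"

definition hiding_game ::
  "(nat \<Rightarrow> 'ck pmf) \<Rightarrow> ('ck \<Rightarrow> 'r set) \<Rightarrow> ('ck \<Rightarrow> 'm \<Rightarrow> 'r \<Rightarrow> 'c) \<Rightarrow>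
   (nat \<Rightarrow> 'ck \<Rightarrow> ('m \<times> 'm \<times> 's) pmf) \<Rightarrow> (nat \<Rightarrow> 'c \<Rightarrow> 's \<Rightarrow> bool pmf) \<Rightarrow>
   nat \<Rightarrow> bool pmf" where
  "hiding_game ckg Omega com B1 B2 k =
     do { ck \<leftarrow> ckg k;
          (m0, m1, st) \<leftarrow> B1 k ck;
          b \<leftarrow> coin_pmf;
          r \<leftarrow> pmf_of_set (Omega ck);
          b' \<leftarrow> B2 k (com ck (if b then m1 else m0) r) st;
          return_pmf (b = b') }"

definition hiding_adv ::
  "(nat \<Rightarrow> 'ck pmf) \<Rightarrow> ('ck \<Rightarrow> 'r set) \<Rightarrow> ('ck \<Rightarrow> 'm \<Rightarrow> 'r \<Rightarrow> 'c) \<Rightarrow>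
   (nat \<Rightarrow> 'ck \<Rightarrow> ('m \<times> 'm \<times> 's) pmf) \<Rightarrow> (nat \<Rightarrow> 'c \<Rightarrow> 's \<Rightarrow> bool pmf) \<Rightarrow>
   nat \<Rightarrow> real" where
  "hiding_adv ckg Omega com B1 B2 k = \<bar>pmf (hiding_game ckg Omega com B1 B2 k) True - 1/2\<bar>"

text \<open>Hash family: index sets hidx k (the key H is sampled uniformly from the family);
  DS: setup dss and key generation dskg.  Public parameters pp = (H, ck, ppDS).\<close>

definition OS_setup ::
  "(nat \<Rightarrow> 'i set) \<Rightarrow> (nat \<Rightarrow> 'ck pmf) \<Rightarrow> (nat \<Rightarrow> 'pds pmf) \<Rightarrow> nat \<Rightarrow> ('i \<times> 'ck \<times> 'pds) pmf" where
  "OS_setup hidx ckg dss k =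
     do { h \<leftarrow> pmf_of_set (hidx k); ck \<leftarrow> ckg k; pds \<leftarrow> dss k; return_pmf (h, ck, pds) }"

definition OS_keygen ::
  "('pds \<Rightarrow> ('vk \<times> 'sk) pmf) \<Rightarrow> ('i \<times> 'ck \<times> 'pds) \<Rightarrow> ('vk \<times> 'sk) pmf" where
  "OS_keygen dskg pp = dskg (snd (snd pp))"

text \<open>User's first move; None represents the output bottom.\<close>
definition OS_U1 ::
  "('ck \<Rightarrow> 'r set) \<Rightarrow> ('ck \<Rightarrow> 'm \<Rightarrow> 'r \<Rightarrow> 'c) \<Rightarrow> ('i \<times> 'ck \<times> 'pds) \<Rightarrow> 'vk \<Rightarrow> 'm list \<Rightarrow> nat
   \<Rightarrow> ('c \<times> ('m list \<times> 'c \<times> 'r \<times> nat)) option pmf" where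
  "OS_U1 Omega com pp vk M j =
     (if \<not> distinct M then return_pmf None
      else do { r \<leftarrow> pmf_of_set (Omega (fst (snd pp)));
                let c = com (fst (snd pp)) (M ! j) r;
                return_pmf (Some (c, (M, c, r, j))) })"

text \<open>If A1's output
  is not well-formed (M not a list of n messages or an index out of range), the
  experiment outputs a uniformly random bit (the adversary gains nothing).\<close>

definition amb_game ::
  "(nat \<Rightarrow> 'i set) \<Rightarrow> (nat \<Rightarrow> 'ck pmf) \<Rightarrow> ('ck \<Rightarrow> 'r set) \<Rightarrow> ('ck \<Rightarrow> 'm \<Rightarrow> 'r \<Rightarrow> 'c) \<Rightarrow>
   (nat \<Rightarrow> 'pds pmf) \<Rightarrow> ('pds \<Rightarrow> ('vk \<times> 'sk) pmf) \<Rightarrow> nat \<Rightarrow>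
   (nat \<Rightarrow> ('i \<times> 'ck \<times> 'pds) \<Rightarrow> 'vk \<Rightarrow> 'sk \<Rightarrow> ('m list \<times> nat \<times> nat \<times> 's) pmf) \<Rightarrow>
   (nat \<Rightarrow> 'c option \<Rightarrow> 's \<Rightarrow> bool pmf) \<Rightarrow> nat \<Rightarrow> bool pmf" where
  "amb_game hidx ckg Omega com dss dskg n A1 A2 k =
     do { pp \<leftarrow> OS_setup hidx ckg dss k;
          (vk, sk) \<leftarrow> OS_keygen dskg pp;
          (M, i0, i1, stA) \<leftarrow> A1 k pp vk sk;
          if length M = n \<and> i0 < n \<and> i1 < n then
            do { b \<leftarrow> coin_pmf;
                 u \<leftarrow> OS_U1 Omega com pp vk M (if b then i1 else i0);
                 b' \<leftarrow> A2 k (map_option fst u) stA;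
                 return_pmf (b = b') }
          else coin_pmf }"

definition amb_adv ::
  "(nat \<Rightarrow> 'i set) \<Rightarrow> (nat \<Rightarrow> 'ck pmf) \<Rightarrow> ('ck \<Rightarrow> 'r set) \<Rightarrow> ('ck \<Rightarrow> 'm \<Rightarrow> 'r \<Rightarrow> 'c) \<Rightarrow>
   (nat \<Rightarrow> 'pds pmf) \<Rightarrow> ('pds \<Rightarrow> ('vk \<times> 'sk) pmf) \<Rightarrow> nat \<Rightarrow>
   (nat \<Rightarrow> ('i \<times> 'ck \<times> 'pds) \<Rightarrow> 'vk \<Rightarrow> 'sk \<Rightarrow> ('m list \<times> nat \<times> nat \<times> 's) pmf) \<Rightarrow>
   (nat \<Rightarrow> 'c option \<Rightarrow> 's \<Rightarrow> bool pmf) \<Rightarrow> nat \<Rightarrow> real" where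
  "amb_adv hidx ckg Omega com dss dskg n A1 A2 k =
     \<bar>pmf (amb_game hidx ckg Omega com dss dskg n A1 A2 k) True - 1/2\<bar>"

text \<open>Used only to express that PPT ambiguity adversaries yield PPT hiding adversaries
  (the reduction only additionally runs the PPT algorithms Setup and DS.KeyGen).
  Tag 0: commit to M!i0 / M!i1 and forward; tag 1: U1 outputs bottom; tag 2: ill-formed.\<close>

definition red_B1 ::
  "(nat \<Rightarrow> 'i set) \<Rightarrow> (nat \<Rightarrow> 'pds pmf) \<Rightarrow> ('pds \<Rightarrow> ('vk \<times> 'sk) pmf) \<Rightarrow> nat \<Rightarrow>
   (nat \<Rightarrow> ('i \<times> 'ck \<times> 'pds) \<Rightarrow> 'vk \<Rightarrow> 'sk \<Rightarrow> ('m list \<times> nat \<times> nat \<times> 's) pmf) \<Rightarrow>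
   nat \<Rightarrow> 'ck \<Rightarrow> ('m \<times> 'm \<times> (nat \<times> 's)) pmf" where
  "red_B1 hidx dss dskg n A1 k ck =
     do { h \<leftarrow> pmf_of_set (hidx k); pds \<leftarrow> dss k; (vk, sk) \<leftarrow> dskg pds;
          (M, i0, i1, stA) \<leftarrow> A1 k (h, ck, pds) vk sk;
          return_pmf
            (if length M = n \<and> i0 < n \<and> i1 < n then
               (if distinct M then (M ! i0, M ! i1, (0, stA)) else (undefined, undefined, (1, stA)))
             else (undefined, undefined, (2, stA))) }"

definition red_B2 ::
  "(nat \<Rightarrow> 'c option \<Rightarrow> 's \<Rightarrow> bool pmf) \<Rightarrow> nat \<Rightarrow> 'c \<Rightarrow> (nat \<times> 's) \<Rightarrow> bool pmf" where
  "red_B2 A2 k c st =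
     (if fst st = 0 then A2 k (Some c) (snd st)
      else if fst st = 1 then A2 k None (snd st) else coin_pmf)"

end

theory Submission
  imports Defs
begin

text \<open>The first message of the user is a fresh commitment to \<open>m\<^sub>j\<close>, or \<open>\<bottom>\<close> independently of
  \<open>j\<close>. Hence an
  ambiguity adversary becomes a hiding adversary once it runs Setup and DS.KeyGen itself on
  the given commitment key, committing to \<open>m\<^sub>i\<^sub>0\<close> and \<open>m\<^sub>i\<^sub>1\<close>. The two
  experiments then induce literally the same distribution on the outcome, so the advantages
  coincide and negligibility transfers.\<close>

lemma map_pmf_eq_coin_pmf: "map_pmf (\<lambda>b. b = c) coin_pmf = coin_pmf"
  unfolding coin_pmf_def
  by (rule map_pmf_of_set_bij_betw) (auto simp: bij_betw_def inj_on_def image_iff)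

lemma coin_pmf_independent_guess:
  "bind_pmf coin_pmf (\<lambda>b. bind_pmf q (\<lambda>b'. return_pmf (b = b'))) = coin_pmf"
proof -
  have "bind_pmf coin_pmf (\<lambda>b. bind_pmf q (\<lambda>b'. return_pmf (b = b')))
      = bind_pmf q (\<lambda>b'. map_pmf (\<lambda>b. b = b') coin_pmf)"
    by (subst bind_commute_pmf) (simp add: map_pmf_def)
  then show ?thesis
    by (simp add: map_pmf_eq_coin_pmf bind_pmf_const)
qed

lemma bind_OS_U1_first_message:
  "bind_pmf (OS_U1 Omega com (h, ck, pds) vk M j) (\<lambda>u. f (map_option fst u)) =
   (if distinct M then bind_pmf (pmf_of_set (Omega ck)) (\<lambda>r. f (Some (com ck (M ! j) r)))
    else f None)"
  by (simp add: OS_U1_def bind_assoc_pmf bind_return_pmf Let_def)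

text \<open>The right-hand side is the hiding experiment run on the output of \<open>red_B1\<close>.\<close>

lemma amb_challenge_eq_hiding_challenge:
  "(if length M = n \<and> i0 < n \<and> i1 < n then
      do { b \<leftarrow> coin_pmf;
           u \<leftarrow> OS_U1 Omega com (h, ck, pds) vk M (if b then i1 else i0);
           b' \<leftarrow> A2 k (map_option fst u) stA;
           return_pmf (b = b') }
    else coin_pmf) =
   (case (if length M = n \<and> i0 < n \<and> i1 < n then
            (if distinct M then (M ! i0, M ! i1, (0, stA)) else (undefined, undefined, (1, stA)))
          else (undefined, undefined, (2, stA))) of
      (m0, m1, st) \<Rightarrow>
        do { b \<leftarrow> coin_pmf;
             r \<leftarrow> pmf_of_set (Omega ck);
             b' \<leftarrow> red_B2 A2 k (com ck (if b then m1 else m0) r) st;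
             return_pmf (b = b') })"
proof (cases "length M = n \<and> i0 < n \<and> i1 < n")
  case True
  have first_message:
    "OS_U1 Omega com (h, ck, pds) vk M j \<bind> (\<lambda>u. A2 k (map_option fst u) stA \<bind> g) =
     (if distinct M then pmf_of_set (Omega ck) \<bind> (\<lambda>r. A2 k (Some (com ck (M ! j) r)) stA \<bind> g)
      else A2 k None stA \<bind> g)" for g j
    by (rule bind_OS_U1_first_message)
  from True show ?thesis
    by (cases "distinct M")
      (simp_all add: first_message red_B2_def bind_pmf_const if_distrib[of "(!) M"])
next
  case False
  show ?thesis
    unfolding if_not_P[OF False] prod.case
    by (simp add: red_B2_def bind_pmf_const coin_pmf_independent_guess)
qed

lemma OS_setup_sample_ck_first:
  "OS_setup hidx ckg dss k =
     do { ck \<leftarrow> ckg k; h \<leftarrow> pmf_of_set (hidx k); pds \<leftarrow> dss k; return_pmf (h, ck, pds) }"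
  unfolding OS_setup_def by (rule bind_commute_pmf)

lemma amb_game_eq_hiding_game:
  "amb_game hidx ckg Omega com dss dskg n A1 A2 k =
   hiding_game ckg Omega com (red_B1 hidx dss dskg n A1) (red_B2 A2) k"
  unfolding amb_game_def hiding_game_def red_B1_def OS_setup_sample_ck_first OS_keygen_def
  by (simp add: bind_assoc_pmf bind_return_pmf amb_challenge_eq_hiding_challenge
      prod.case_distrib[where h = "\<lambda>p. bind_pmf p _"])

lemma amb_adv_eq_hiding_adv:
  "amb_adv hidx ckg Omega com dss dskg n A1 A2 =
   hiding_adv ckg Omega com (red_B1 hidx dss dskg n A1) (red_B2 A2)"
  by (rule ext) (simp add: amb_adv_def hiding_adv_def amb_game_eq_hiding_game)

text \<open>The hypotheses on \<open>n\<close> only matter for the Merkle tree, which the first message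
  never touches.\<close>

theorem theorem1:
  fixes hidx :: "nat \<Rightarrow> 'i set"
    and ckg :: "nat \<Rightarrow> 'ck pmf" and Omega :: "'ck \<Rightarrow> 'r set" and com :: "'ck \<Rightarrow> 'm \<Rightarrow> 'r \<Rightarrow> 'c"
    and dss :: "nat \<Rightarrow> 'pds pmf" and dskg :: "'pds \<Rightarrow> ('vk \<times> 'sk) pmf"
    and n :: nat
    and PPT_hid :: "((nat \<Rightarrow> 'ck \<Rightarrow> ('m \<times> 'm \<times> (nat \<times> 's)) pmf) \<times> (nat \<Rightarrow> 'c \<Rightarrow> nat \<times> 's \<Rightarrow> bool pmf)) set"
    and PPT_amb :: "((nat \<Rightarrow> ('i \<times> 'ck \<times> 'pds) \<Rightarrow> 'vk \<Rightarrow> 'sk \<Rightarrow> ('m list \<times> nat \<times> nat \<times> 's) pmf)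
                     \<times> (nat \<Rightarrow> 'c option \<Rightarrow> 's \<Rightarrow> bool pmf)) set"
  assumes n_pow2: "\<exists>l::nat. n = 2 ^ l" and n_gt1: "n > 1"
    and hiding: "\<forall>(B1, B2) \<in> PPT_hid. negligible (hiding_adv ckg Omega com B1 B2)"
    and reduction_ppt: "\<forall>(A1, A2) \<in> PPT_amb. (red_B1 hidx dss dskg n A1, red_B2 A2) \<in> PPT_hid"
  shows "\<forall>(A1, A2) \<in> PPT_amb. negligible (amb_adv hidx ckg Omega com dss dskg n A1 A2)"
proof (intro ballI, clarify)
  fix A1 A2
  assume "(A1, A2) \<in> PPT_amb"
  with reduction_ppt have "(red_B1 hidx dss dskg n A1, red_B2 A2) \<in> PPT_hid"
    by blast
  with hiding show "negligible (amb_adv hidx ckg Omega com dss dskg n A1 A2)"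
    unfolding amb_adv_eq_hiding_adv by blast
qed

end
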